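(* Let $n\geq 3$ be an integer and let $$\mathcal P_n=\Big\{(\kappa,\lambda)\in\mathbb R^2:\ \kappa\sin(x)+\sum_{k=2}^{n-1}\sin(kx)+\lambda\sin(nx)\geq 0\ \text{for all } x\in[0,\pi]\Big\}.$$ For every $\lambda\in\mathbb R$ there exists $\kappa_0=\kappa_0(\lambda;n)$ such that $(\kappa,\lambda)\in\mathcal P_n$ if and only if $\kappa\geq\kappa_0$. Moreover: (i) If $n$ is odd, then $\kappa_0=\frac{n+1}{2}-n\lambda$ for $\lambda\in\big(-\infty,\frac{2n-3}{4n}\big]$; $\kappa_0>\frac{n+1}{2}-n\lambda$ for $\lambda\in\big(\frac{2n-3}{4n},\frac12\big]$; and $\kappa_0>1$ for $\lambda\in\big(\frac12,\infty\big)$. (ii) If $n$ is even, then $\kappa_0>1$ for $\lambda\in\big(-\infty,\frac12\big)$, and $\kappa_0=n\lambda-\frac{n-2}{2}$ for $\lambda\in\big[\frac12,\infty\big)$. *)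

theory Defs
  imports "HOL-Analysis.Analysis"
begin

definition trig_poly_P :: "nat \<Rightarrow> (real \<times> real) set" where
  "trig_poly_P n = {(kap, lam). \<forall>x\<in>{0..pi}.
      kap * sin x + (\<Sum>k=2..n-1. sin (real k * x)) + lam * sin (real n * x) \<ge> 0}"

end

theory Submission
  imports Defs
begin

(* Write T(x) = \<kappa> sin x + (\<Sum>k=2..n-1. sin (k x)) + \<lambda> sin (n x) and let
   K\<^sub>n(x) = (\<Sum>k<n. sin (k x)) + sin (n x) / 2 be the modified conjugate Dirichlet kernel, so that
   T = K\<^sub>n + (\<kappa> - 1) sin x + (\<lambda> - 1/2) sin (n x). The identity
   2 sin (x/2) K\<^sub>n(x) = cos (x/2) (1 - cos (n x)) shows K\<^sub>n \<ge> 0 on [0, \<pi>], with double zeros at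
   the points 2 \<pi> j / n. As T vanishes at 0 and \<pi>, membership means \<kappa> \<ge> -(T - \<kappa> sin x) / sin x
   on (0, \<pi>), so \<kappa>\<^sub>0 is the supremum of the right-hand side.

   Upper bounds on \<kappa>\<^sub>0 are decompositions into nonnegative parts. For even n and \<lambda> \<ge> 1/2,
   at \<kappa> = n \<lambda> - (n - 2)/2 one has T = K\<^sub>n + (\<lambda> - 1/2) (n sin x + sin (n x)). For odd n,
   at \<kappa> = (n + 1)/2 - n \<lambda> one has
   4 n T = (n sin x + 4 n K\<^sub>n - 3 sin (n x)) + (2 n - 3 - 4 n \<lambda>) (n sin x - sin (n x)),
   and the first bracket is nonnegative: near \<pi> by Taylor bounds for sin, cos and tan, and
   elsewhere as a positive definite quadratic form in sin (n x/2), cos (n x/2).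

   Lower bounds come from zeros of T. Since T(\<pi>) = 0, T'(\<pi>) \<le> 0, which reads
   \<kappa> \<ge> (\<Sum>k=2..n-1. (-1)^k k) + (-1)^n n \<lambda>. For odd n at the boundary value, T, T' and T''
   vanish at \<pi>, and T'''(\<pi>) > 0 as soon as \<lambda> > (2 n - 3)/(4 n). For \<kappa> = 1, T has a simple
   zero at 2 \<pi> / n unless \<lambda> = 1/2, so \<kappa>\<^sub>0 > 1. *)

section \<open>Polynomial bounds for sine, cosine and tangent\<close>

lemma DERIV_nonneg_imp_le_from_zero:
  fixes f f' :: "real \<Rightarrow> real"
  assumes "0 \<le> x" "\<And>u. (f has_real_derivative f' u) (at u)" "\<And>u. 0 \<le> u \<Longrightarrow> 0 \<le> f' u"
  shows "f 0 \<le> f x"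
  by (rule DERIV_nonneg_imp_nondecreasing[OF assms(1)]) (use assms in blast)

lemma cos_lower_Taylor_quadratic:
  fixes x :: real
  assumes "0 \<le> x"
  shows "1 - x^2/2 \<le> cos x"
proof -
  have "(\<lambda>x. cos x - 1 + x^2/2) 0 \<le> (\<lambda>x. cos x - 1 + x^2/2) x"
    by (rule DERIV_nonneg_imp_le_from_zero[OF assms, of _ "\<lambda>u. u - sin u"],
        (rule derivative_eq_intros refl | simp)+)
      (use sin_x_le_x in auto)
  then show ?thesis by simp
qed

lemma sin_lower_Taylor_cubic:
  fixes x :: real
  assumes "0 \<le> x"
  shows "x - x^3/6 \<le> sin x"
proof -
  have "(\<lambda>x. sin x - x + x^3/6) 0 \<le> (\<lambda>x. sin x - x + x^3/6) x"
    by (rule DERIV_nonneg_imp_le_from_zero[OF assms, of _ "\<lambda>u. cos u - 1 + u^2/2"],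
        (rule derivative_eq_intros refl | simp)+)
      (use cos_lower_Taylor_quadratic in force)
  then show ?thesis by simp
qed

lemma cos_upper_Taylor_quartic:
  fixes x :: real
  assumes "0 \<le> x"
  shows "cos x \<le> 1 - x^2/2 + x^4/24"
proof -
  have "(\<lambda>x. 1 - x^2/2 + x^4/24 - cos x) 0 \<le> (\<lambda>x. 1 - x^2/2 + x^4/24 - cos x) x"
    by (rule DERIV_nonneg_imp_le_from_zero[OF assms, of _ "\<lambda>u. sin u - u + u^3/6"],
        (rule derivative_eq_intros refl | simp)+)
      (use sin_lower_Taylor_cubic in force)
  then show ?thesis by simp
qed

lemma sin_upper_Taylor_quintic:
  fixes x :: real
  assumes "0 \<le> x"
  shows "sin x \<le> x - x^3/6 + x^5/120"
proof -
  have "(\<lambda>x. x - x^3/6 + x^5/120 - sin x) 0 \<le> (\<lambda>x. x - x^3/6 + x^5/120 - sin x) x"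
    by (rule DERIV_nonneg_imp_le_from_zero[OF assms, of _ "\<lambda>u. 1 - u^2/2 + u^4/24 - cos u"],
        (rule derivative_eq_intros refl | simp)+)
      (use cos_upper_Taylor_quartic in force)
  then show ?thesis by simp
qed

lemma cos_lower_Taylor_sextic:
  fixes x :: real
  assumes "0 \<le> x"
  shows "1 - x^2/2 + x^4/24 - x^6/720 \<le> cos x"
proof -
  have "(\<lambda>x. cos x - (1 - x^2/2 + x^4/24 - x^6/720)) 0
          \<le> (\<lambda>x. cos x - (1 - x^2/2 + x^4/24 - x^6/720)) x"
    by (rule DERIV_nonneg_imp_le_from_zero[OF assms, of _ "\<lambda>u. u - u^3/6 + u^5/120 - sin u"],
        (rule derivative_eq_intros refl | simp)+)
      (use sin_upper_Taylor_quintic in force)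
  then show ?thesis by simp
qed

lemma tan_lower_Taylor_cubic:
  fixes y :: real
  assumes "0 \<le> y" "y < pi/2"
  shows "y + y^3/3 \<le> tan y"
proof -
  have "y^2 \<le> 9"
    using power_mono[of y 3 2] assms pi_less_4 by simp
  then have "y^5 * y^2 \<le> y^5 * 9"
    using assms by (intro mult_left_mono) auto
  then have poly: "(y + y^3/3) * (1 - y^2/2 + y^4/24) \<le> y - y^3/6"
    by (simp add: algebra_simps power2_eq_square power3_eq_cube eval_nat_numeral)
  have "(y + y^3/3) * cos y \<le> (y + y^3/3) * (1 - y^2/2 + y^4/24)"
    by (rule mult_left_mono[OF cos_upper_Taylor_quartic]) (use assms in auto)
  also note poly
  also have "y - y^3/6 \<le> sin y"
    using sin_lower_Taylor_cubic assms by simp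
  finally show ?thesis
    using cos_gt_zero_pi[of y] assms by (simp add: tan_def pos_le_divide_eq)
qed

lemma cubic_le_two_x_plus_x_cos_minus_three_sin:
  fixes x :: real
  assumes x: "0 \<le> x" "x \<le> pi"
  shows "x^3 * (1 - cos x) / 108 \<le> 2 * x + x * cos x - 3 * sin x"
proof (cases "x \<le> 29/10")
  case True
  have "x^3 * (1 - cos x) \<le> x^3 * (x^2/2)"
    by (rule mult_left_mono) (use cos_lower_Taylor_quadratic[OF x(1)] x in auto)
  then have lhs: "x^3 * (1 - cos x) / 108 \<le> x^5/216"
    by (simp add: eval_nat_numeral)
  have "x * (1 - x^2/2 + x^4/24 - x^6/720) \<le> x * cos x"
    by (rule mult_left_mono[OF cos_lower_Taylor_sextic]) (use x in auto)
  then have rhs: "x^5/60 - x^7/720 \<le> 2 * x + x * cos x - 3 * sin x"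
    using sin_upper_Taylor_quintic[OF x(1)] by (simp add: algebra_simps eval_nat_numeral)
  have sq: "x * x \<le> 29/10 * (29/10)" by (rule mult_mono) (use True x in auto)
  have "x^5 * x^2 \<le> x^5 * (841/100)"
    using mult_left_mono[OF sq, of "x^5"] x by (simp add: power2_eq_square)
  moreover have "x^7 = x^5 * x^2" by (simp flip: power_add)
  moreover have "0 \<le> x^5" using x by simp
  ultimately have "x^5/216 \<le> x^5/60 - x^7/720" by linarith
  with lhs rhs show ?thesis by linarith
next
  case False
  have "sin x = sin (pi - x)" by simp
  also have "\<dots> \<le> pi - x" by (rule sin_x_le_x) (use x in simp)
  finally have "sin x \<le> 1/4" using False pi_approx by simp
  moreover have "- x \<le> x * cos x"
    using mult_left_mono[of "-1" "cos x" x] x by simp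
  ultimately have rhs: "2 \<le> 2 * x + x * cos x - 3 * sin x"
    using False by simp
  have "x^3 * (1 - cos x) \<le> 4^3 * 2"
    using x pi_less_4 by (intro mult_mono power_mono) auto
  with rhs show ?thesis by simp
qed

lemma three_sin_mult_le_tan_half:
  fixes t N :: real
  assumes t: "0 < t" "N * t \<le> pi" and N: "3 \<le> N"
  shows "3 * sin (N * t) \<le> N * sin t + 2 * N * tan (t/2) * (1 + cos (N * t))"
proof -
  define p where "p = N * t"
  have p: "0 \<le> p" "p \<le> pi" using t N unfolding p_def by auto
  have "3 * t \<le> N * t" using N t by (intro mult_right_mono) auto
  then have "t/2 < pi/2" using t pi_gt_zero by linarith
  then have tan: "t/2 + (t/2)^3/3 \<le> tan (t/2)"
    using tan_lower_Taylor_cubic t by simp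
  have "N * (t - t^3/6) \<le> N * sin t"
    by (rule mult_left_mono[OF sin_lower_Taylor_cubic]) (use t N in auto)
  moreover have "2 * N * (t/2 + (t/2)^3/3) * (1 + cos p) \<le> 2 * N * tan (t/2) * (1 + cos p)"
  proof -
    have "0 \<le> 1 + cos p" using cos_ge_minus_one[of p] by linarith
    then show ?thesis using N by (intro mult_right_mono mult_left_mono tan) auto
  qed
  moreover have "N * (t - t^3/6) + 2 * N * (t/2 + (t/2)^3/3) * (1 + cos p) - 3 * sin p
      = 2 * p + p * cos p - 3 * sin p - p^3 * (1 - cos p) / (12 * N^2)"
    using N unfolding p_def by (simp add: field_simps eval_nat_numeral)
  moreover have "p^3 * (1 - cos p) / (12 * N^2) \<le> p^3 * (1 - cos p) / 108"
  proof (rule divide_left_mono)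
    show "108 \<le> 12 * N^2" using power_mono[OF N, of 2] by simp
  qed (use p N in auto)
  moreover note cubic_le_two_x_plus_x_cos_minus_three_sin[OF p]
  ultimately show ?thesis unfolding p_def by linarith
qed

section \<open>The modified conjugate Dirichlet kernel\<close>

definition modified_conj_dirichlet :: "nat \<Rightarrow> real \<Rightarrow> real" where
  "modified_conj_dirichlet n x = (\<Sum>k<n. sin (real k * x)) + sin (real n * x) / 2"

lemma modified_conj_dirichlet_closed_form:
  "2 * sin (x/2) * modified_conj_dirichlet n x = cos (x/2) * (1 - cos (real n * x))"
proof (induction n)
  case (Suc n)
  have step: "2 * sin (x/2) * ((sin (real n * x) + sin ((real n + 1) * x)) / 2)
      = cos (x/2) * (cos (real n * x) - cos ((real n + 1) * x))"
    by (simp add: sin_plus_sin cos_diff_cos algebra_simps add_divide_distrib)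
  have "2 * sin (x/2) * modified_conj_dirichlet (Suc n) x
      = 2 * sin (x/2) * modified_conj_dirichlet n x
        + 2 * sin (x/2) * ((sin (real n * x) + sin ((real n + 1) * x)) / 2)"
    by (simp add: modified_conj_dirichlet_def algebra_simps)
  also have "\<dots> = cos (x/2) * (1 - cos (real (Suc n) * x))"
    unfolding Suc.IH step by (simp add: algebra_simps)
  finally show ?case .
qed (simp add: modified_conj_dirichlet_def)

lemma modified_conj_dirichlet_nonneg:
  assumes "0 \<le> x" "x \<le> pi"
  shows "0 \<le> modified_conj_dirichlet n x"
proof (cases "x = 0")
  case False
  have s: "0 < sin (x/2)" by (rule sin_gt_zero) (use assms False in auto)
  have "0 \<le> cos (x/2)" by (rule cos_ge_zero) (use assms in auto)
  then have "0 \<le> 2 * sin (x/2) * modified_conj_dirichlet n x"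
    unfolding modified_conj_dirichlet_closed_form by simp
  with s show ?thesis by (simp add: zero_le_mult_iff)
qed (simp add: modified_conj_dirichlet_def)

lemma sin_odd_mult_pi_minus: "odd n \<Longrightarrow> sin (real n * (pi - t)) = sin (real n * t)"
  by (simp add: right_diff_distrib sin_diff)

lemma cos_odd_mult_pi_minus: "odd n \<Longrightarrow> cos (real n * (pi - t)) = - cos (real n * t)"
  by (simp add: right_diff_distrib cos_diff)

lemma modified_conj_dirichlet_odd_pi_minus:
  assumes "odd n"
  shows "2 * cos (t/2) * modified_conj_dirichlet n (pi - t) = sin (t/2) * (1 + cos (real n * t))"
proof -
  have "sin ((pi - t)/2) = cos (t/2)" "cos ((pi - t)/2) = sin (t/2)"
    by (simp_all add: diff_divide_distrib sin_diff cos_diff)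
  then show ?thesis
    using modified_conj_dirichlet_closed_form[of "pi - t" n] cos_odd_mult_pi_minus[OF assms]
    by simp
qed

lemma abs_sin_real_mult_le: "\<bar>sin (real k * x)\<bar> \<le> real k * \<bar>sin x\<bar>"
proof (induction k)
  case (Suc k)
  have "sin (real (Suc k) * x) = sin (real k * x) * cos x + cos (real k * x) * sin x"
    using sin_add[of "real k * x" x] by (simp add: algebra_simps)
  then have "\<bar>sin (real (Suc k) * x)\<bar> = \<bar>sin (real k * x) * cos x + cos (real k * x) * sin x\<bar>"
    by simp
  also have "\<dots> \<le> \<bar>sin (real k * x)\<bar> * \<bar>cos x\<bar> + \<bar>cos (real k * x)\<bar> * \<bar>sin x\<bar>"
    by (metis abs_mult abs_triangle_ineq)
  also have "\<dots> \<le> \<bar>sin (real k * x)\<bar> * 1 + 1 * \<bar>sin x\<bar>"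
    by (intro add_mono mult_left_mono mult_right_mono) auto
  also have "\<dots> \<le> real (Suc k) * \<bar>sin x\<bar>"
    using Suc.IH by (simp add: algebra_simps)
  finally show ?case .
qed simp

lemma abs_sin_real_mult_le_on_0_pi:
  assumes "0 \<le> x" "x \<le> pi"
  shows "\<bar>sin (real n * x)\<bar> \<le> real n * sin x"
  using abs_sin_real_mult_le[of n x] sin_ge_zero[OF assms] by simp

lemma quadratic_form_nonneg:
  fixes A B p q :: real
  assumes "0 < A" "9 \<le> A * B"
  shows "0 \<le> A * p^2 - 6 * p * q + B * q^2"
proof -
  have "0 \<le> (A * p - 3 * q)^2 + (A * B - 9) * q^2"
    using assms by simp
  also have "\<dots> = A * (A * p^2 - 6 * p * q + B * q^2)"
    by (simp add: algebra_simps power2_eq_square)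
  finally show ?thesis using assms(1) by (simp add: zero_le_mult_iff)
qed

lemma three_sin_mult_le_conj_dirichlet_near_pi:
  assumes n: "odd n" "3 \<le> n" and t: "0 < t" "real n * t \<le> pi"
  shows "3 * sin (real n * (pi - t))
    \<le> real n * sin (pi - t) + 4 * real n * modified_conj_dirichlet n (pi - t)"
proof -
  have "3 * t \<le> real n * t" using n t by (intro mult_right_mono) auto
  then have "t < pi" using t by linarith
  then have "0 < cos (t/2)" using t by (intro cos_gt_zero) auto
  then have "modified_conj_dirichlet n (pi - t)
      = sin (t/2) * (1 + cos (real n * t)) / (2 * cos (t/2))"
    using modified_conj_dirichlet_odd_pi_minus[OF n(1), of t] by (simp add: eq_divide_eq mult_ac)
  also have "\<dots> = tan (t/2) * (1 + cos (real n * t)) / 2"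
    by (simp add: tan_def)
  finally have "4 * real n * modified_conj_dirichlet n (pi - t)
      = 2 * real n * tan (t/2) * (1 + cos (real n * t))"
    by simp
  then show ?thesis
    using three_sin_mult_le_tan_half[of t "real n"] n t
    unfolding sin_odd_mult_pi_minus[OF n(1)] sin_pi_minus by linarith
qed

text \<open>Write \<open>s, c\<close> for \<open>sin (x/2), cos (x/2)\<close> and \<open>p, q\<close> for
  \<open>sin (n x/2), cos (n x/2)\<close>. The closed form gives \<open>K\<^sub>n(x) = c p\<^sup>2 / s\<close>, so
  \<open>n sin x + 4 n K\<^sub>n(x) - 3 sin (n x)\<close> is the quadratic form \<open>A p\<^sup>2 - 6 p q + B q\<^sup>2\<close>
  with \<open>A = 2 n s c + 4 n c / s\<close>, \<open>B = 2 n s c\<close>, and \<open>A B \<ge> 8 n\<^sup>2 c\<^sup>2\<close>.\<close>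

lemma three_sin_mult_le_conj_dirichlet_if_cos_half_large:
  assumes x: "0 < x" "x < pi" and c9: "9 \<le> 8 * real n^2 * cos (x/2)^2"
  shows "3 * sin (real n * x) \<le> real n * sin x + 4 * real n * modified_conj_dirichlet n x"
proof -
  define s c p q where "s = sin (x/2)" and "c = cos (x/2)"
    and "p = sin (real n * x / 2)" and "q = cos (real n * x / 2)"
  have s: "0 < s" unfolding s_def by (rule sin_gt_zero) (use x in auto)
  have c: "0 < c" unfolding c_def by (rule cos_gt_zero) (use x in auto)
  define A B where "A = 2 * real n * s * c + 4 * real n * c / s" and "B = 2 * real n * s * c"
  have "A * B = 4 * real n^2 * s^2 * c^2 + 8 * real n^2 * c^2"
    unfolding A_def B_def using s by (simp add: field_simps power2_eq_square)
  moreover have "0 \<le> 4 * real n^2 * s^2 * c^2" by simp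
  ultimately have AB: "9 \<le> A * B"
    using c9 unfolding c_def by linarith
  have "0 < real n" using c9 by (cases "n = 0") auto
  then have A: "0 < A" unfolding A_def using s c by (simp add: add_pos_pos)
  have double: "sin x = 2 * s * c" "sin (real n * x) = 2 * p * q"
      "cos (real n * x) = 1 - 2 * p^2" "p^2 + q^2 = 1"
    unfolding s_def c_def p_def q_def
    using sin_double[of "x/2"] sin_double[of "real n * x / 2"] cos_double_sin[of "real n * x / 2"]
    by simp_all
  have "2 * s * modified_conj_dirichlet n x = c * (2 * p^2)"
    using modified_conj_dirichlet_closed_form[of x n] double(3) unfolding s_def c_def by simp
  then have K: "modified_conj_dirichlet n x = c * p^2 / s"
    using s by (simp add: field_simps)
  have "real n * sin x = B * (p^2 + q^2)"
    unfolding double(1,4) B_def by simp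
  moreover have "4 * real n * modified_conj_dirichlet n x = (A - B) * p^2"
    unfolding K A_def B_def by simp
  ultimately have "real n * sin x + 4 * real n * modified_conj_dirichlet n x - 3 * sin (real n * x)
      = A * p^2 - 6 * p * q + B * q^2"
    unfolding double(2) by (simp add: algebra_simps)
  then show ?thesis using quadratic_form_nonneg[OF A AB, of p q] by simp
qed

lemma nine_le_cos_half_sq_far_from_pi:
  assumes n: "3 \<le> n" and x: "0 \<le> x" and far: "2 * pi < real n * (pi - x)"
  shows "9 \<le> 8 * real n^2 * cos (x/2)^2"
proof -
  have N: "3 \<le> real n" using n by simp
  define y where "y = pi / real n"
  have "pi / real n \<le> pi / 3" by (rule divide_left_mono) (use N in auto)
  then have y: "0 < y" "y \<le> pi/3" using N unfolding y_def by auto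
  have "y \<le> (pi - x)/2" using far N unfolding y_def by (simp add: field_simps)
  then have "sin y \<le> sin ((pi - x)/2)"
    using y x far by (intro sin_monotone_2pi_le) (auto simp: field_simps)
  also have "\<dots> = cos (x/2)" by (simp add: diff_divide_distrib sin_diff)
  finally have sy: "sin y \<le> cos (x/2)" .
  have "y * y \<le> 3"
    using y pi_less_4 mult_mono[of y "4/3" y "4/3"] by simp
  then have "y * (y * y) \<le> y * 3"
    using y by (intro mult_left_mono) auto
  then have "y/2 \<le> y - y^3/6"
    by (simp add: power3_eq_cube)
  then have cy: "y/2 \<le> cos (x/2)" using sin_lower_Taylor_cubic[of y] y sy by simp
  have "2 * pi^2 = 8 * real n^2 * (y/2)^2" using N unfolding y_def by (simp add: field_simps)
  also have "\<dots> \<le> 8 * real n^2 * cos (x/2)^2"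
    using cy y by (intro mult_left_mono power_mono) auto
  finally show ?thesis using pi_gt3 power_mono[of 3 pi 2] by simp
qed

text \<open>Since \<open>sin (n x) = sin (n t)\<close> for \<open>t = pi - x\<close>, the inequality is only in danger where
  \<open>sin (n t) > 0\<close>, that is for \<open>n t < pi\<close> or \<open>n t > 2 pi\<close>.\<close>

lemma three_sin_mult_le_conj_dirichlet:
  assumes n: "odd n" "3 \<le> n" and x: "0 \<le> x" "x \<le> pi"
  shows "3 * sin (real n * x) \<le> real n * sin x + 4 * real n * modified_conj_dirichlet n x"
proof (cases "sin (real n * x) \<le> 0")
  case True
  moreover have "0 \<le> real n * sin x" "0 \<le> 4 * real n * modified_conj_dirichlet n x"
    using modified_conj_dirichlet_nonneg[OF x, of n] sin_ge_zero[OF x] by simp_all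
  ultimately show ?thesis by linarith
next
  case False
  define t where "t = pi - x"
  have x_eq: "x = pi - t" unfolding t_def by simp
  have sin_nt: "0 < sin (real n * t)"
    using False sin_odd_mult_pi_minus[OF n(1), of t] unfolding x_eq by simp
  have "0 < x" "0 < t" using False x unfolding t_def by (auto simp: le_less)
  have "\<not> (pi \<le> real n * t \<and> real n * t \<le> 2 * pi)"
    using sin_ge_zero[of "real n * t - pi"] sin_nt by (auto simp: sin_diff)
  then consider "real n * t < pi" | "2 * pi < real n * t" by linarith
  then show ?thesis
  proof cases
    case 1
    then show ?thesis
      using three_sin_mult_le_conj_dirichlet_near_pi[OF n \<open>0 < t\<close>] unfolding x_eq by simp
  next
    case 2
    then have "9 \<le> 8 * real n^2 * cos (x/2)^2"
      using nine_le_cos_half_sq_far_from_pi[OF n(2) x(1)] unfolding t_def by simp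
    then show ?thesis
      using three_sin_mult_le_conj_dirichlet_if_cos_half_large \<open>0 < x\<close> \<open>0 < t\<close>
      unfolding t_def by simp
  qed
qed

section \<open>Sign changes at zeros of finite order\<close>

lemma Taylor_negative_left_of_zero:
  fixes D :: "nat \<Rightarrow> real \<Rightarrow> real"
  assumes deriv: "\<And>j x. (D j has_real_derivative D (Suc j) x) (at x)"
    and m: "0 < m" and zero: "\<And>j. j < m \<Longrightarrow> D j c = 0"
    and sign: "(-1)^m * D m c < 0" and e: "0 < e"
  shows "\<exists>x. c - e < x \<and> x < c \<and> D 0 x < 0"
proof -
  have "isCont (\<lambda>y. (-1)^m * D m y) c"
    using DERIV_isCont[OF deriv] by (intro continuous_intros)
  then have "eventually (\<lambda>y. (-1)^m * D m y < 0) (at c)"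
    using sign unfolding isCont_def by (rule order_tendstoD)
  then obtain b where b: "b < c" "\<And>y. b < y \<Longrightarrow> y < c \<Longrightarrow> (-1)^m * D m y < 0"
    unfolding eventually_at_split eventually_at_left_field by blast
  define x where "x = (max b (c - e) + c) / 2"
  have x: "c - e < x" "b < x" "x < c" using b e unfolding x_def by auto
  obtain t where t: "x < t" "t < c"
    and taylor: "D 0 x = (\<Sum>j<m. D j c / fact j * (x - c)^j) + D m t / fact m * (x - c)^m"
    using Taylor_down[of m D "D 0" x c c] m x deriv by blast
  have "D 0 x = ((-1)^m * D m t) * ((c - x)^m / fact m)"
    using taylor zero power_minus[of "c - x" m] by simp
  also have "\<dots> < 0"
  proof (rule mult_neg_pos)
    show "(-1)^m * D m t < 0" using b(2) t x by simp
    show "0 < (c - x)^m / fact m" using x by simp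
  qed
  finally show ?thesis using x by blast
qed

lemma DERIV_nonzero_at_zero_imp_negative:
  fixes f :: "real \<Rightarrow> real"
  assumes "(f has_real_derivative l) (at c)" "l \<noteq> 0" "f c = 0" "a < c" "c < b"
  shows "\<exists>x\<in>{a<..<b}. f x < 0"
proof (cases "0 < l")
  case True
  then obtain d where d: "0 < d" "\<And>h. 0 < h \<Longrightarrow> h < d \<Longrightarrow> f (c - h) < f c"
    using DERIV_pos_inc_left[OF assms(1)] by blast
  define h where "h = min d (c - a) / 2"
  have "0 < h" "h < d" "h < c - a" using d assms unfolding h_def by auto
  then show ?thesis using d(2) assms by (intro bexI[of _ "c - h"]) auto
next
  case False
  then obtain d where d: "0 < d" "\<And>h. 0 < h \<Longrightarrow> h < d \<Longrightarrow> f (c + h) < f c"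
    using DERIV_neg_dec_right[OF assms(1)] assms(2) by force
  define h where "h = min d (b - c) / 2"
  have "0 < h" "h < d" "h < b - c" using d assms unfolding h_def by auto
  then show ?thesis using d(2) assms by (intro bexI[of _ "c + h"]) auto
qed

section \<open>Sine polynomials\<close>

definition sine_sum_deriv :: "(nat \<Rightarrow> real) \<Rightarrow> nat \<Rightarrow> nat \<Rightarrow> real \<Rightarrow> real" where
  "sine_sum_deriv a n j x = (\<Sum>k=1..n. a k * real k ^ j * sin (real k * x + real j * pi / 2))"

lemma has_real_derivative_sine_sum_deriv:
  "(sine_sum_deriv a n j has_real_derivative sine_sum_deriv a n (Suc j) x) (at x)"
proof -
  have "(sine_sum_deriv a n j has_real_derivative
      (\<Sum>k=1..n. cos (real k * x + real j * pi / 2) * real k * (a k * real k ^ j))) (at x)"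
    unfolding sine_sum_deriv_def[abs_def]
    by (rule derivative_eq_intros refl | simp)+
  then show ?thesis
    unfolding sine_sum_deriv_def sin_expansion_lemma by (simp add: mult_ac)
qed

lemma sine_sum_deriv_at_pi:
  "sine_sum_deriv a n j pi = sin (real j * pi / 2) * (\<Sum>k=1..n. (-1)^k * real k ^ j * a k)"
  unfolding sine_sum_deriv_def sum_distrib_left by (simp add: sin_add mult_ac)

definition trig_poly :: "nat \<Rightarrow> real \<Rightarrow> real \<Rightarrow> real \<Rightarrow> real" where
  "trig_poly n kap lam x = kap * sin x + (\<Sum>k=2..n-1. sin (real k * x)) + lam * sin (real n * x)"

definition trig_coeff :: "nat \<Rightarrow> real \<Rightarrow> real \<Rightarrow> nat \<Rightarrow> real" where
  "trig_coeff n kap lam k = (if k = 1 then kap else if k = n then lam else 1)"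

lemma mem_trig_poly_P_iff: "(kap, lam) \<in> trig_poly_P n \<longleftrightarrow> (\<forall>x\<in>{0..pi}. 0 \<le> trig_poly n kap lam x)"
  by (simp add: trig_poly_P_def trig_poly_def)

lemma sum_lessThan_eq_sum_from_2:
  fixes n :: nat and f :: "nat \<Rightarrow> 'a::comm_monoid_add"
  assumes "2 \<le> n"
  shows "(\<Sum>k<n. f k) = f 0 + f 1 + (\<Sum>k=2..n-1. f k)"
proof -
  have "{..<n} = insert 0 (insert 1 {2..n-1})" using assms by auto
  then show ?thesis by (simp add: add.assoc)
qed

lemma sum_trig_coeff:
  assumes "3 \<le> n"
  shows "(\<Sum>k=1..n. trig_coeff n kap lam k * g k) = kap * g 1 + (\<Sum>k=2..n-1. g k) + lam * g n"
proof -
  have "{1..n} = insert 1 (insert n {2..n-1})" using assms by auto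
  moreover have "(\<Sum>k=2..n-1. trig_coeff n kap lam k * g k) = (\<Sum>k=2..n-1. g k)"
    by (rule sum.cong) (auto simp: trig_coeff_def)
  ultimately show ?thesis using assms by (simp add: trig_coeff_def)
qed

lemma trig_poly_eq_sine_sum_deriv:
  "3 \<le> n \<Longrightarrow> trig_poly n kap lam x = sine_sum_deriv (trig_coeff n kap lam) n 0 x"
  using sum_trig_coeff[of n kap lam "\<lambda>k. sin (real k * x)"]
  unfolding sine_sum_deriv_def trig_poly_def by simp

lemma sine_sum_deriv_trig_coeff_at_pi:
  assumes "3 \<le> n"
  shows "sine_sum_deriv (trig_coeff n kap lam) n j pi
    = sin (real j * pi / 2) * (- kap + (\<Sum>k=2..n-1. (-1)^k * real k ^ j) + (-1)^n * real n ^ j * lam)"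
  using sum_trig_coeff[OF assms, of kap lam "\<lambda>k. (-1)^k * real k ^ j"]
  unfolding sine_sum_deriv_at_pi by (simp add: mult_ac)

lemma trig_poly_eq_modified_conj_dirichlet:
  assumes "3 \<le> n"
  shows "trig_poly n kap lam x
    = modified_conj_dirichlet n x + (kap - 1) * sin x + (lam - 1/2) * sin (real n * x)"
  using sum_lessThan_eq_sum_from_2[of n "\<lambda>k. sin (real k * x)"] assms
  by (simp add: trig_poly_def modified_conj_dirichlet_def algebra_simps)

lemma not_mem_trig_poly_P_by_Taylor_at_pi:
  assumes n: "3 \<le> n" and m: "0 < m"
    and zero: "\<And>j. j < m \<Longrightarrow> sine_sum_deriv (trig_coeff n kap lam) n j pi = 0"
    and sign: "(-1)^m * sine_sum_deriv (trig_coeff n kap lam) n m pi < 0"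
  shows "(kap, lam) \<notin> trig_poly_P n"
proof -
  obtain x where "0 < x" "x < pi" "sine_sum_deriv (trig_coeff n kap lam) n 0 x < 0"
    using Taylor_negative_left_of_zero[OF has_real_derivative_sine_sum_deriv m zero sign pi_gt_zero]
    by auto
  then show ?thesis
    unfolding mem_trig_poly_P_iff trig_poly_eq_sine_sum_deriv[OF n]
    by (auto simp: not_le intro!: bexI[of _ x])
qed

section \<open>The threshold \<open>kappa0\<close>\<close>

definition kappa0 :: "nat \<Rightarrow> real \<Rightarrow> real" where
  "kappa0 n lam = (SUP x\<in>{0<..<pi}. - trig_poly n 0 lam x / sin x)"

lemma abs_trig_poly_zero_le:
  "\<bar>trig_poly n 0 lam x\<bar> \<le> ((\<Sum>k=2..n-1. real k) + \<bar>lam\<bar> * real n) * \<bar>sin x\<bar>"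
proof -
  have "\<bar>\<Sum>k=2..n-1. sin (real k * x)\<bar> \<le> (\<Sum>k=2..n-1. \<bar>sin (real k * x)\<bar>)"
    by (rule sum_abs)
  also have "\<dots> \<le> (\<Sum>k=2..n-1. real k * \<bar>sin x\<bar>)"
    by (rule sum_mono) (rule abs_sin_real_mult_le)
  finally have "\<bar>\<Sum>k=2..n-1. sin (real k * x)\<bar> \<le> (\<Sum>k=2..n-1. real k) * \<bar>sin x\<bar>"
    by (simp add: sum_distrib_right)
  moreover have "\<bar>lam * sin (real n * x)\<bar> \<le> \<bar>lam\<bar> * real n * \<bar>sin x\<bar>"
    using mult_left_mono[OF abs_sin_real_mult_le, of "\<bar>lam\<bar>" n x] by (simp add: abs_mult mult.assoc)
  moreover have "\<bar>trig_poly n 0 lam x\<bar>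
      \<le> \<bar>\<Sum>k=2..n-1. sin (real k * x)\<bar> + \<bar>lam * sin (real n * x)\<bar>"
    unfolding trig_poly_def by (simp add: abs_triangle_ineq)
  ultimately show ?thesis by (simp add: distrib_right)
qed

lemma bdd_above_kappa0:
  "bdd_above ((\<lambda>x. - trig_poly n 0 lam x / sin x) ` {0<..<pi})"
proof (rule bdd_aboveI2)
  fix x :: real assume "x \<in> {0<..<pi}"
  then have s: "0 < sin x" by (intro sin_gt_zero) auto
  then show "- trig_poly n 0 lam x / sin x \<le> (\<Sum>k=2..n-1. real k) + \<bar>lam\<bar> * real n"
    using abs_trig_poly_zero_le[of n lam x] pos_divide_le_eq[OF s, of "- trig_poly n 0 lam x"]
    by (simp add: abs_le_iff)
qed

lemma mem_trig_poly_P_iff_kappa0_le: "(kap, lam) \<in> trig_poly_P n \<longleftrightarrow> kappa0 n lam \<le> kap"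
proof -
  have ne: "{0<..<pi} \<noteq> {}" by (simp add: not_le)
  have "{0..pi} = insert 0 (insert pi {0<..<pi})" using pi_gt_zero by auto
  then have "(\<forall>x\<in>{0..pi}. 0 \<le> trig_poly n kap lam x) \<longleftrightarrow> (\<forall>x\<in>{0<..<pi}. 0 \<le> trig_poly n kap lam x)"
    by (simp add: trig_poly_def)
  also have "\<dots> \<longleftrightarrow> (\<forall>x\<in>{0<..<pi}. - trig_poly n 0 lam x / sin x \<le> kap)"
  proof (intro ball_cong refl)
    fix x :: real assume "x \<in> {0<..<pi}"
    then have "0 < sin x" by (intro sin_gt_zero) auto
    then show "0 \<le> trig_poly n kap lam x \<longleftrightarrow> - trig_poly n 0 lam x / sin x \<le> kap"
      by (simp add: trig_poly_def pos_divide_le_eq) arith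
  qed
  finally show ?thesis
    unfolding mem_trig_poly_P_iff kappa0_def cSUP_le_iff[OF ne bdd_above_kappa0] .
qed

lemma sum_alternating_lessThan_even: "(\<Sum>k<2*p. (-1)^k * real k) = - real p"
  by (induction p) (auto simp: algebra_simps)

lemma sum_alternating_cubes_lessThan_even:
  "(\<Sum>k<2*p. (-1)^k * real k ^ 3) = real p^2 * (3 - 4 * real p)"
  by (induction p) (auto simp: algebra_simps power2_eq_square power3_eq_cube)

lemma sum_alternating_from_2_odd:
  assumes "odd n" "3 \<le> n"
  shows "(\<Sum>k=2..n-1. (-1)^k * real k) = (real n + 1) / 2"
proof -
  obtain p where p: "n = 2*p + 1" using assms(1) oddE by blast
  have "(\<Sum>k<n. (-1)^k * real k) = real p"
    unfolding p using sum_alternating_lessThan_even[of p] by simp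
  then show ?thesis
    using sum_lessThan_eq_sum_from_2[of n "\<lambda>k. (-1)^k * real k"] assms p by simp
qed

lemma sum_alternating_from_2_even:
  assumes "even n" "3 \<le> n"
  shows "(\<Sum>k=2..n-1. (-1)^k * real k) = - (real n - 2) / 2"
proof -
  obtain p where p: "n = 2*p" using assms(1) evenE by blast
  then show ?thesis
    using sum_lessThan_eq_sum_from_2[of n "\<lambda>k. (-1)^k * real k"] assms
      sum_alternating_lessThan_even[of p] by simp
qed

lemma sum_alternating_cubes_from_2_odd:
  assumes "odd n" "3 \<le> n"
  shows "(\<Sum>k=2..n-1. (-1)^k * real k ^ 3) = (real n - 1)^2 * (2 * real n + 1) / 4 + 1"
proof -
  obtain p where p: "n = 2*p + 1" using assms(1) oddE by blast
  have "(\<Sum>k=2..n-1. (-1)^k * real k ^ 3) = (\<Sum>k<n. (-1)^k * real k ^ 3) + 1"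
    using sum_lessThan_eq_sum_from_2[of n "\<lambda>k. (-1)^k * real k ^ 3"] assms by simp
  also have "(\<Sum>k<n. (-1)^k * real k ^ 3) = real p^2 * (3 - 4 * real p) + (2 * real p) ^ 3"
    unfolding p using sum_alternating_cubes_lessThan_even[of p] by simp
  also have "\<dots> + 1 = (real n - 1)^2 * (2 * real n + 1) / 4 + 1"
    unfolding p by (simp add: field_simps power2_eq_square power3_eq_cube)
  finally show ?thesis .
qed

lemma kappa0_ge_alternating_sum:
  assumes n: "3 \<le> n"
  shows "(\<Sum>k=2..n-1. (-1)^k * real k) + (-1)^n * real n * lam \<le> kappa0 n lam"
proof (rule ccontr)
  let ?a = "trig_coeff n (kappa0 n lam) lam"
  assume "\<not> ?thesis"
  then have "(-1)^1 * sine_sum_deriv ?a n 1 pi < 0"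
    unfolding sine_sum_deriv_trig_coeff_at_pi[OF n] by simp
  moreover have "sine_sum_deriv ?a n 0 pi = 0"
    unfolding sine_sum_deriv_trig_coeff_at_pi[OF n] by simp
  ultimately have "(kappa0 n lam, lam) \<notin> trig_poly_P n"
    by (intro not_mem_trig_poly_P_by_Taylor_at_pi[OF n]) auto
  then show False by (simp add: mem_trig_poly_P_iff_kappa0_le)
qed

lemma kappa0_odd_eq:
  assumes n: "odd n" "3 \<le> n" and lam: "lam \<le> (2 * real n - 3) / (4 * real n)"
  shows "kappa0 n lam = (real n + 1) / 2 - real n * lam"
proof (rule antisym)
  have N: "3 \<le> real n" using n by simp
  have "0 \<le> trig_poly n ((real n + 1) / 2 - real n * lam) lam x" if x: "0 \<le> x" "x \<le> pi" for x
  proof -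
    have "trig_poly n ((real n + 1) / 2 - real n * lam) lam x
        = (real n * sin x + 4 * real n * modified_conj_dirichlet n x - 3 * sin (real n * x)) / (4 * real n)
          + ((2 * real n - 3) / (4 * real n) - lam) * (real n * sin x - sin (real n * x))"
      unfolding trig_poly_eq_modified_conj_dirichlet[OF n(2)] using N by (simp add: field_simps)
    moreover have "0 \<le> real n * sin x + 4 * real n * modified_conj_dirichlet n x - 3 * sin (real n * x)"
      using three_sin_mult_le_conj_dirichlet[OF n x] by simp
    moreover have "0 \<le> ((2 * real n - 3) / (4 * real n) - lam) * (real n * sin x - sin (real n * x))"
      using lam abs_sin_real_mult_le_on_0_pi[OF x, of n] by (intro mult_nonneg_nonneg) auto
    ultimately show ?thesis using N by simp
  qed
  then show "kappa0 n lam \<le> (real n + 1) / 2 - real n * lam"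
    unfolding mem_trig_poly_P_iff_kappa0_le[symmetric] mem_trig_poly_P_iff by simp
  have "(\<Sum>k=2..n-1. (-1)^k * real k) - real n * lam \<le> kappa0 n lam"
    using kappa0_ge_alternating_sum[OF n(2), of lam] n(1) by simp
  then show "(real n + 1) / 2 - real n * lam \<le> kappa0 n lam"
    unfolding sum_alternating_from_2_odd[OF n] .
qed

lemma kappa0_odd_gt:
  assumes n: "odd n" "3 \<le> n" and lam: "(2 * real n - 3) / (4 * real n) < lam"
  shows "(real n + 1) / 2 - real n * lam < kappa0 n lam"
proof -
  define c where "c = (real n + 1) / 2 - real n * lam"
  let ?D = "\<lambda>j. sine_sum_deriv (trig_coeff n c lam) n j pi"
  have N: "3 \<le> real n" using n by simp
  have sin3: "sin (3 * pi / 2) = -1" using sin_add[of pi "pi/2"] by simp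
  have "?D j = 0" if "j < 3" for j
  proof -
    have "j = 0 \<or> j = 1 \<or> j = 2" using that by auto
    then show ?thesis
      using n(1) sum_alternating_from_2_odd[OF n]
      by (auto simp: sine_sum_deriv_trig_coeff_at_pi[OF n(2)] c_def)
  qed
  moreover have "?D 3 = (real n ^ 3 - real n) * (lam - (2 * real n - 3) / (4 * real n))"
    unfolding sine_sum_deriv_trig_coeff_at_pi[OF n(2)] sum_alternating_cubes_from_2_odd[OF n] c_def
    using n(1) sin3 N by (simp add: field_simps power2_eq_square power3_eq_cube)
  moreover have "0 < real n ^ 3 - real n"
    using N power_strict_increasing[of 1 3 "real n"] by simp
  ultimately have "(c, lam) \<notin> trig_poly_P n"
    using lam by (intro not_mem_trig_poly_P_by_Taylor_at_pi[OF n(2), of 3]) auto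
  then show ?thesis unfolding c_def mem_trig_poly_P_iff_kappa0_le by simp
qed

lemma kappa0_gt_one:
  assumes n: "3 \<le> n" and lam: "lam \<noteq> 1/2"
  shows "1 < kappa0 n lam"
proof -
  define K where "K = modified_conj_dirichlet n"
  define x0 where "x0 = 2 * pi / real n"
  have N: "3 \<le> real n" using n by simp
  have "x0 \<le> 2 * pi / 3" unfolding x0_def by (rule divide_left_mono) (use N in auto)
  moreover have "0 < x0" unfolding x0_def using N by simp
  ultimately have x0: "0 < x0" "x0 < pi" using pi_gt_zero by linarith+
  have nx0: "real n * x0 = 2 * pi" unfolding x0_def using N by simp
  have "0 < sin (x0/2)" by (rule sin_gt_zero) (use x0 in auto)
  then have K0: "K x0 = 0"
    using modified_conj_dirichlet_closed_form[of x0 n] unfolding K_def nx0 by simp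
  have dK: "(K has_real_derivative
      (\<Sum>k<n. cos (real k * x0) * real k) + cos (real n * x0) * real n / 2) (at x0)"
    unfolding K_def modified_conj_dirichlet_def[abs_def] by (rule derivative_eq_intros refl | simp)+
  have "(\<Sum>k<n. cos (real k * x0) * real k) + cos (real n * x0) * real n / 2 = 0"
  proof (rule DERIV_local_min[OF dK])
    show "0 < min x0 (pi - x0)" using x0 by simp
    show "\<forall>y. \<bar>x0 - y\<bar> < min x0 (pi - x0) \<longrightarrow> K x0 \<le> K y"
      using K0 modified_conj_dirichlet_nonneg unfolding K_def by (auto simp: abs_less_iff)
  qed
  then have "((\<lambda>x. K x + (lam - 1/2) * sin (real n * x))
      has_real_derivative (lam - 1/2) * real n) (at x0)"
    using dK nx0 by (auto intro!: derivative_eq_intros)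
  then have "\<exists>x\<in>{0<..<pi}. K x + (lam - 1/2) * sin (real n * x) < 0"
    by (rule DERIV_nonzero_at_zero_imp_negative) (use x0 K0 nx0 lam N in auto)
  moreover have "trig_poly n 1 lam x = K x + (lam - 1/2) * sin (real n * x)" for x
    unfolding K_def trig_poly_eq_modified_conj_dirichlet[OF n] by simp
  ultimately obtain x where "x \<in> {0<..<pi}" "trig_poly n 1 lam x < 0"
    by auto
  then have "(1, lam) \<notin> trig_poly_P n"
    unfolding mem_trig_poly_P_iff by (auto simp: not_le intro!: bexI[of _ x])
  then show ?thesis unfolding mem_trig_poly_P_iff_kappa0_le by simp
qed

lemma kappa0_even_eq:
  assumes n: "even n" "3 \<le> n" and lam: "1/2 \<le> lam"
  shows "kappa0 n lam = real n * lam - (real n - 2) / 2"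
proof (rule antisym)
  have "0 \<le> trig_poly n (real n * lam - (real n - 2) / 2) lam x" if x: "0 \<le> x" "x \<le> pi" for x
  proof -
    have "trig_poly n (real n * lam - (real n - 2) / 2) lam x
        = (lam - 1/2) * (real n * sin x + sin (real n * x)) + modified_conj_dirichlet n x"
      unfolding trig_poly_eq_modified_conj_dirichlet[OF n(2)] by (simp add: field_simps)
    moreover have "0 \<le> (lam - 1/2) * (real n * sin x + sin (real n * x))"
      using lam abs_sin_real_mult_le_on_0_pi[OF x, of n] by (intro mult_nonneg_nonneg) auto
    ultimately show ?thesis using modified_conj_dirichlet_nonneg[OF x, of n] by simp
  qed
  then show "kappa0 n lam \<le> real n * lam - (real n - 2) / 2"
    unfolding mem_trig_poly_P_iff_kappa0_le[symmetric] mem_trig_poly_P_iff by simp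
  have "(\<Sum>k=2..n-1. (-1)^k * real k) + real n * lam \<le> kappa0 n lam"
    using kappa0_ge_alternating_sum[OF n(2), of lam] n(1) by simp
  then show "real n * lam - (real n - 2) / 2 \<le> kappa0 n lam"
    unfolding sum_alternating_from_2_even[OF n] by linarith
qed

theorem theorem4:
  fixes n :: nat
  assumes "n \<ge> 3"
  shows "\<forall>lam::real. \<exists>kap0::real.
    (\<forall>kap. (kap, lam) \<in> trig_poly_P n \<longleftrightarrow> kap \<ge> kap0) \<and>
    (odd n \<longrightarrow>
       (lam \<le> (2 * real n - 3) / (4 * real n) \<longrightarrow> kap0 = (real n + 1) / 2 - real n * lam) \<and>
       ((2 * real n - 3) / (4 * real n) < lam \<and> lam \<le> 1/2 \<longrightarrow> kap0 > (real n + 1) / 2 - real n * lam) \<and>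
       (lam > 1/2 \<longrightarrow> kap0 > 1)) \<and>
    (even n \<longrightarrow>
       (lam < 1/2 \<longrightarrow> kap0 > 1) \<and>
       (lam \<ge> 1/2 \<longrightarrow> kap0 = real n * lam - (real n - 2) / 2))"
  using mem_trig_poly_P_iff_kappa0_le kappa0_odd_eq[OF _ assms] kappa0_odd_gt[OF _ assms]
    kappa0_gt_one[OF assms] kappa0_even_eq[OF _ assms]
  by (metis less_irrefl)

end
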